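(* There is an absolute constant $K$ such that the following holds. Let $C\ge1$, let $I$ be an instance of dynamic bin packing with migration delays in which every item has duration at least $1$, run Algorithm 3 (described in the context) on $I$, and let $\tilde I_b$ be the instance of big parts defined in the context. Then $\mathrm{FirstFit}(\tilde I_b)\le K\sqrt{C}\cdot\mathrm{OPT}(I)$.
   Context: Dynamic bin packing with migration delays: bins have capacity $1$; items arrive online at times $a_i\ge0$ with size $s_i\in[0,1]$ and initial duration $d_i>0$ (unknown at arrival). Each migration of an item (moving it to another bin) increases its duration by $C$; the delayed duration is $\tilde d_i=d_i+(\text{number of migrations of } i)\cdot C$ and the item departs at $a_i+\tilde d_i$. A bin is open while nonempty. For an instance $J$, $\mathrm{FirstFit}(J)$ is the total active time $\int_0^\infty(\text{number of open bins at } t)\,dt$ of the FirstFit algorithm on $J$ (each arriving item goes into the earliest-opened open bin with enough remaining capacity, else a new bin; no migrations), and $\mathrm{OPT}(J)=\int_0^\infty\mathrm{OPT}_t\,dt$ with $\mathrm{OPT}_t$ the minimum number of unit bins needed to pack the items of $J$ present at time $t$ (for $I$, using the original durations $d_i$). Algorithm 3: maintain two disjoint pools of bins $I_s$ and $I_b$. Each arriving item is placed into $I_s$ by FirstFit. When an item has been in $I_s$ for exactly $\sqrt{C}$ time, it is migrated into $I_b$ by FirstFit. When an item has been in $I_b$ for exactly $C+\sqrt{C}$ time since its most recent migration, it is migrated into $I_b$ by FirstFit. Big parts: for each item $i$ that Algorithm 3 migrates, at times $t_1<\dots<t_m$ ($m\ge1$), its big parts are items of size $s_i$ with arrival time $t_j$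 and duration $t_{j+1}-t_j$ for $j=1,\dots,m-1$, together with a final big part with arrival time $t_m$ and duration $a_i+\tilde d_i-t_m$ (ending when the item departs). $\tilde I_b$ is the instance consisting of all big parts of all items. *)

theory Defs
  imports "HOL-Analysis.Analysis"
begin

text \<open>An item is a triple (arrival time, size, duration).  An instance is a finite
  list of items; item i of instance J is J ! i for i < length J.\<close>

type_synonym item = "real \<times> real \<times> real"

definition arr :: "item \<Rightarrow> real" where "arr it = fst it"
definition sz  :: "item \<Rightarrow> real" where "sz it = fst (snd it)"
definition dur :: "item \<Rightarrow> real" where "dur it = snd (snd it)"

definition valid_instance :: "item list \<Rightarrow> bool" where
  "valid_instance J \<longleftrightarrow> (\<forall>it\<in>set J. 0 \<le> arr it \<and> 0 \<le> sz it \<and> sz it \<le> 1 \<and> 0 < dur it)"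

text \<open>Item i is present at time t iff arrival <= t < arrival + duration
  (so at a common time, departures happen before arrivals).\<close>
definition present :: "item list \<Rightarrow> nat \<Rightarrow> real \<Rightarrow> bool" where
  "present J i t \<longleftrightarrow> i < length J \<and> arr (J ! i) \<le> t \<and> t < arr (J ! i) + dur (J ! i)"

text \<open>Items are processed in order of arrival; simultaneous arrivals in list order (sort_key is a stable sort).\<close>
definition ff_order :: "item list \<Rightarrow> nat list" where
  "ff_order J = sort_key (\<lambda>i. arr (J ! i)) [0..<length J]"

text \<open>Bins get identifiers 0,1,2,... in the order in which they are opened.
  State: (assignment item -> bin id, set of already placed items, number of bins opened so far).\<close>
definition bin_load :: "item list \<Rightarrow> nat set \<Rightarrow> (nat \<Rightarrow> nat) \<Rightarrow> nat \<Rightarrow> real \<Rightarrow> real" where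
  "bin_load J P asg b t = (\<Sum>j\<in>P. if asg j = b \<and> present J j t then sz (J ! j) else 0)"

definition bin_is_open :: "item list \<Rightarrow> nat set \<Rightarrow> (nat \<Rightarrow> nat) \<Rightarrow> nat \<Rightarrow> real \<Rightarrow> bool" where
  "bin_is_open J P asg b t \<longleftrightarrow> (\<exists>j\<in>P. asg j = b \<and> present J j t)"

fun ff_run :: "item list \<Rightarrow> nat list \<Rightarrow> (nat \<Rightarrow> nat) \<times> nat set \<times> nat \<Rightarrow> (nat \<Rightarrow> nat) \<times> nat set \<times> nat" where
  "ff_run J [] st = st"
| "ff_run J (i # is) (asg, P, n) =
     (let t = arr (J ! i);
          fits = {b. b < n \<and> bin_is_open J P asg b t \<and> bin_load J P asg b t + sz (J ! i) \<le> 1}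
      in if fits \<noteq> {} then ff_run J is (asg(i := Min fits), insert i P, n)
         else ff_run J is (asg(i := n), insert i P, Suc n))"

definition ff_assign :: "item list \<Rightarrow> nat \<Rightarrow> nat" where
  "ff_assign J = fst (ff_run J (ff_order J) (\<lambda>_. 0, {}, 0))"

definition ff_open_bins :: "item list \<Rightarrow> real \<Rightarrow> nat" where
  "ff_open_bins J t = card {b. \<exists>i<length J. ff_assign J i = b \<and> present J i t}"

definition FirstFit :: "item list \<Rightarrow> ennreal" where
  "FirstFit J = (\<integral>\<^sup>+ t\<in>{0..}. ennreal (real (ff_open_bins J t)) \<partial>lborel)"

definition OPT_at :: "item list \<Rightarrow> real \<Rightarrow> nat" where
  "OPT_at J t = (LEAST k. \<exists>f :: nat \<Rightarrow> nat.
       (\<forall>i. present J i t \<longrightarrow> f i < k) \<and>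
       (\<forall>b<k. (\<Sum>i\<in>{i. present J i t \<and> f i = b}. sz (J ! i)) \<le> 1))"

definition OPT :: "item list \<Rightarrow> ennreal" where
  "OPT J = (\<integral>\<^sup>+ t\<in>{0..}. ennreal (real (OPT_at J t)) \<partial>lborel)"

text \<open>Under Algorithm 3 the migration times of an item do not depend on the packing:
  the (j+1)-th migration (j = 0,1,...) is scheduled at time
  a + sqrt C + j (C + sqrt C) (sqrt C after arrival, then C + sqrt C after each
  migration), and it takes place iff the item is still present then, i.e. iff its
  departure time with the j migrations performed so far, a + d + j C, is later.\<close>
definition mig_time :: "real \<Rightarrow> item \<Rightarrow> nat \<Rightarrow> real" where
  "mig_time C it j = arr it + sqrt C + real j * (C + sqrt C)"

definition num_mig :: "real \<Rightarrow> item \<Rightarrow> nat" where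
  "num_mig C it = (LEAST j. \<not> (mig_time C it j < arr it + dur it + real j * C))"

definition alg3_departure :: "real \<Rightarrow> item \<Rightarrow> real" where
  "alg3_departure C it = arr it + dur it + real (num_mig C it) * C"

text \<open>Big parts of one item: for migrations t_1 < ... < t_m (here indices 0..m-1),
  part j arrives at t_j with the item's size and lasts until the next migration,
  the last one until the item departs.\<close>
definition big_parts_item :: "real \<Rightarrow> item \<Rightarrow> item list" where
  "big_parts_item C it =
     map (\<lambda>j. (mig_time C it j, sz it,
               (if Suc j < num_mig C it then mig_time C it (Suc j) else alg3_departure C it)
               - mig_time C it j))
         [0..<num_mig C it]"

definition big_parts :: "real \<Rightarrow> item list \<Rightarrow> item list" where
  "big_parts C I = concat (map (big_parts_item C) I)"

end

theory Submission
  imports Defs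
begin

(* Each big part of an item of size s and duration d lasts at most C + sqrt C and lies inside
   the stretched lifetime [a, a + (1 + sqrt C) d), since an item migrated m times satisfies
   m sqrt C < d and hence m C < sqrt C d.  For the same reason the big parts of the item, each
   lengthened by C + sqrt C, have total size-time at most 4 sqrt C s d.

   FirstFit on an instance whose durations are at most D keeps at most 1 + 2 S(t) bins open at
   time t, where S(t) is the total size of the items alive at some time in (t - D, t]: of two
   bins open at t, the later one holds an item that did not fit into the earlier one, whose
   content at that moment consists of items alive then.  Integrating over t bounds FirstFit by
   the length of the busy period plus twice the total size-time after lengthening every item by
   D.  For the big parts (D = C + sqrt C) the busy period is at most (1 + sqrt C) times that of
   I, since stretching intervals by a factor lam >= 1 multiplies the measure of their union by
   at most lam, and OPT(I) dominates both the busy period and the total size-time of I. *)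

section \<open>FirstFit as a fold over the arrival order\<close>

definition ff_fits :: "item list \<Rightarrow> nat set \<Rightarrow> (nat \<Rightarrow> nat) \<Rightarrow> nat \<Rightarrow> nat \<Rightarrow> nat set" where
  "ff_fits J P asg n i = {b. b < n \<and> bin_is_open J P asg b (arr (J ! i))
                              \<and> bin_load J P asg b (arr (J ! i)) + sz (J ! i) \<le> 1}"

definition ff_choice :: "item list \<Rightarrow> nat set \<Rightarrow> (nat \<Rightarrow> nat) \<Rightarrow> nat \<Rightarrow> nat \<Rightarrow> nat" where
  "ff_choice J P asg n i = (if ff_fits J P asg n i \<noteq> {} then Min (ff_fits J P asg n i) else n)"

definition ff_step :: "item list \<Rightarrow> nat \<Rightarrow> (nat \<Rightarrow> nat) \<times> nat set \<times> nat \<Rightarrow> (nat \<Rightarrow> nat) \<times> nat set \<times> nat" where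
  "ff_step J i = (\<lambda>(asg, P, n). (asg(i := ff_choice J P asg n i), insert i P,
                                 if ff_fits J P asg n i \<noteq> {} then n else Suc n))"

lemma ff_run_Cons: "ff_run J (x # xs) st = ff_run J xs (ff_step J x st)"
proof -
  obtain asg P n where st: "st = (asg, P, n)" by (cases st)
  show ?thesis
    unfolding st ff_run.simps Let_def ff_fits_def[symmetric] by (simp add: ff_step_def ff_choice_def)
qed

lemma ff_run_eq_fold: "ff_run J xs st = fold (ff_step J) xs st"
  by (induction xs arbitrary: st) (simp_all add: ff_run_Cons)

lemma finite_ff_fits: "finite (ff_fits J P asg n i)"
  by (rule finite_subset[of _ "{..<n}"]) (auto simp: ff_fits_def)

lemma ff_choice_less:
  "ff_fits J P asg n i \<noteq> {} \<Longrightarrow> ff_choice J P asg n i < n"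
  "ff_fits J P asg n i \<noteq> {} \<Longrightarrow> ff_choice J P asg n i \<in> ff_fits J P asg n i"
  using Min_in[OF finite_ff_fits] by (auto simp: ff_choice_def ff_fits_def)

lemma ff_choice_le: "ff_choice J P asg n i \<le> n"
  using ff_choice_less(1) by (cases "ff_fits J P asg n i = {}") (auto simp: ff_choice_def less_imp_le)

lemma ff_choice_cong:
  assumes "\<forall>j\<in>P. asg j = asg' j"
  shows "ff_choice J P asg n i = ff_choice J P asg' n i"
proof -
  have "bin_is_open J P asg = bin_is_open J P asg'" "bin_load J P asg = bin_load J P asg'"
    using assms by (auto intro!: ext sum.cong simp: bin_is_open_def bin_load_def)
  then show ?thesis unfolding ff_choice_def ff_fits_def by (simp only:)
qed

lemma fold_ff_step_placed: "fst (snd (fold (ff_step J) xs st)) = fst (snd st) \<union> set xs"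
  by (induction xs arbitrary: st) (auto simp: ff_step_def split: prod.splits)

lemma ff_step_nbins_mono: "snd (snd st) \<le> snd (snd (ff_step J x st))"
  by (auto simp: ff_step_def split: prod.splits)

lemma fold_ff_step_nbins_mono: "snd (snd st) \<le> snd (snd (fold (ff_step J) xs st))"
proof (induction xs arbitrary: st)
  case (Cons x xs)
  then show ?case
    using ff_step_nbins_mono[of st J x] by (simp add: order_trans)
qed simp

lemma fold_ff_step_keeps: "j \<notin> set xs \<Longrightarrow> fst (fold (ff_step J) xs st) j = fst st j"
  by (induction xs arbitrary: st) (auto simp: ff_step_def split: prod.splits)

definition ff_state :: "item list \<Rightarrow> nat \<Rightarrow> (nat \<Rightarrow> nat) \<times> nat set \<times> nat" where
  "ff_state J k = fold (ff_step J) (take k (ff_order J)) (\<lambda>_. 0, {}, 0)"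

definition ff_placed :: "item list \<Rightarrow> nat \<Rightarrow> nat set" where
  "ff_placed J k = fst (snd (ff_state J k))"

definition ff_nbins :: "item list \<Rightarrow> nat \<Rightarrow> nat" where
  "ff_nbins J k = snd (snd (ff_state J k))"

lemma set_ff_order: "set (ff_order J) = {..<length J}"
  by (auto simp: ff_order_def)

lemma length_ff_order [simp]: "length (ff_order J) = length J"
  by (simp add: ff_order_def)

lemma distinct_ff_order: "distinct (ff_order J)"
  by (simp add: ff_order_def)

lemma ff_order_arr_mono:
  "k \<le> k' \<Longrightarrow> k' < length J \<Longrightarrow> arr (J ! (ff_order J ! k)) \<le> arr (J ! (ff_order J ! k'))"
  using sorted_nth_mono[of "map (\<lambda>i. arr (J ! i)) (ff_order J)" k k']
  by (simp add: ff_order_def sorted_sort_key)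

lemma ff_order_surj: "i < length J \<Longrightarrow> \<exists>k<length J. i = ff_order J ! k"
  using set_ff_order[of J] by (metis in_set_conv_nth length_ff_order lessThan_iff)

lemma ff_placed_eq: "ff_placed J k = set (take k (ff_order J))"
  by (simp add: ff_placed_def ff_state_def fold_ff_step_placed)

lemma ff_order_nth_placed: "k' < k \<Longrightarrow> k' < length J \<Longrightarrow> ff_order J ! k' \<in> ff_placed J k"
  using nth_mem[of k' "take k (ff_order J)"] by (simp add: ff_placed_eq)

lemma ff_placed_subset: "ff_placed J k \<subseteq> {..<length J}"
  using set_ff_order[of J] by (auto simp: ff_placed_eq dest: in_set_takeD)

lemma ff_placed_before: "j \<in> ff_placed J k \<Longrightarrow> \<exists>k'<k. k' < length J \<and> j = ff_order J ! k'"
  by (auto simp: ff_placed_eq in_set_conv_nth)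

lemma ff_state_Suc:
  assumes "k < length J"
  shows "ff_state J (Suc k) = ff_step J (ff_order J ! k) (ff_state J k)"
  using assms by (simp add: ff_state_def take_Suc_conv_app_nth)

lemma ff_nbins_mono: "k \<le> k' \<Longrightarrow> ff_nbins J k \<le> ff_nbins J k'"
  using fold_ff_step_nbins_mono take_add[of k "k' - k" "ff_order J"]
  by (simp add: ff_nbins_def ff_state_def)

lemma ff_assign_placed:
  assumes "j \<in> ff_placed J k"
  shows "ff_assign J j = fst (ff_state J k) j"
proof -
  have "j \<notin> set (drop k (ff_order J))"
    using assms set_take_disj_set_drop_if_distinct[OF distinct_ff_order, of k k J]
    by (auto simp: ff_placed_eq)
  then show ?thesis
    using append_take_drop_id[of k "ff_order J"] fold_ff_step_keeps
    by (metis ff_assign_def ff_run_eq_fold ff_state_def fold_append comp_apply)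
qed

lemma ff_assign_step:
  assumes "k < length J" and "x = ff_order J ! k"
  shows "ff_assign J x = ff_choice J (ff_placed J k) (ff_assign J) (ff_nbins J k) x"
proof -
  obtain asg P n where st: "ff_state J k = (asg, P, n)"
    by (cases "ff_state J k")
  have "x \<in> ff_placed J (Suc k)"
    using assms by (simp add: ff_placed_eq take_Suc_conv_app_nth)
  then have "ff_assign J x = fst (ff_state J (Suc k)) x"
    by (rule ff_assign_placed)
  also have "\<dots> = ff_choice J (ff_placed J k) (fst (ff_state J k)) (ff_nbins J k) x"
    using assms by (simp add: ff_state_Suc st ff_step_def ff_placed_def ff_nbins_def)
  also have "\<dots> = ff_choice J (ff_placed J k) (ff_assign J) (ff_nbins J k) x"
    by (intro ff_choice_cong) (simp add: ff_assign_placed)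
  finally show ?thesis .
qed

section \<open>Open bins of FirstFit\<close>

lemma ff_assign_le_nbins: "k < length J \<Longrightarrow> ff_assign J (ff_order J ! k) \<le> ff_nbins J k"
  using ff_assign_step ff_choice_le by metis

lemma ff_overfull_at_arrival:
  assumes "k < length J" and "x = ff_order J ! k" and "b < ff_assign J x"
    and "bin_is_open J (ff_placed J k) (ff_assign J) b (arr (J ! x))"
  shows "1 < bin_load J (ff_placed J k) (ff_assign J) b (arr (J ! x)) + sz (J ! x)"
proof (rule ccontr)
  let ?F = "ff_fits J (ff_placed J k) (ff_assign J) (ff_nbins J k) x"
  assume "\<not> ?thesis"
  moreover have "b < ff_nbins J k"
    using ff_assign_le_nbins assms(1-3) by fastforce
  ultimately have "b \<in> ?F"
    using assms(4) by (simp add: ff_fits_def)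
  then have "ff_assign J x \<le> b"
    using ff_assign_step[OF assms(1,2)] finite_ff_fits by (auto simp: ff_choice_def)
  then show False using assms(3) by simp
qed

lemma ff_reused_bin_is_open:
  assumes "k < length J" and "y = ff_order J ! k" and "ff_assign J y < ff_nbins J k"
  shows "bin_is_open J (ff_placed J k) (ff_assign J) (ff_assign J y) (arr (J ! y))"
proof -
  let ?F = "ff_fits J (ff_placed J k) (ff_assign J) (ff_nbins J k) y"
  have "?F \<noteq> {}"
    using ff_assign_step[OF assms(1,2)] assms(3) by (auto simp: ff_choice_def split: if_splits)
  then show ?thesis
    using ff_choice_less(2) ff_assign_step[OF assms(1,2)] by (fastforce simp: ff_fits_def)
qed

text \<open>Bins never reopen, as FirstFit only reuses open bins: a bin created before x arrived
  that holds an item at some time after that was open when x arrived.\<close>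
lemma ff_bin_open_at_arrival:
  assumes "k < length J" and "x = ff_order J ! k" and "b < ff_nbins J k"
  shows "k' < length J \<Longrightarrow> ff_assign J (ff_order J ! k') = b \<Longrightarrow> present J (ff_order J ! k') t
     \<Longrightarrow> arr (J ! x) \<le> t \<Longrightarrow> bin_is_open J (ff_placed J k) (ff_assign J) b (arr (J ! x))"
proof (induction k' arbitrary: t rule: less_induct)
  case (less k')
  define y where "y = ff_order J ! k'"
  consider "k' < k" | "k' = k" | "k < k'" by linarith
  then show ?case
  proof cases
    case 1
    then have "y \<in> ff_placed J k"
      using less.prems(1) y_def by (simp add: ff_order_nth_placed)
    moreover have "arr (J ! y) \<le> arr (J ! x)"
      using ff_order_arr_mono[of k' k J] 1 assms(1,2) y_def by simp
    ultimately show ?thesis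
      using less.prems y_def by (auto simp: bin_is_open_def present_def)
  next
    case 2
    then show ?thesis
      using ff_reused_bin_is_open[OF assms(1,2)] less.prems assms by simp
  next
    case 3
    have "ff_assign J y < ff_nbins J k'"
      using ff_nbins_mono[of k k' J] 3 assms(3) less.prems(2) y_def by simp
    then have "bin_is_open J (ff_placed J k') (ff_assign J) b (arr (J ! y))"
      using ff_reused_bin_is_open[OF less.prems(1) y_def] less.prems(2) y_def by simp
    then obtain j where j: "j \<in> ff_placed J k'" "ff_assign J j = b" "present J j (arr (J ! y))"
      unfolding bin_is_open_def by blast
    obtain k'' where "k'' < k'" "k'' < length J" "j = ff_order J ! k''"
      using ff_placed_before[OF j(1)] by blast
    moreover have "arr (J ! x) \<le> arr (J ! y)"
      using ff_order_arr_mono[of k k' J] 3 less.prems(1) assms(2) y_def by simp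
    ultimately show ?thesis
      using less.IH j by blast
  qed
qed

lemma ff_overflow:
  assumes sz_nonneg: "\<forall>it\<in>set J. 0 \<le> sz it"
    and "i < length J" and "present J j t" and "arr (J ! i) \<le> t"
    and less: "ff_assign J j < ff_assign J i"
  shows "1 < sz (J ! i) + (\<Sum>l | l < length J \<and> ff_assign J l = ff_assign J j \<and> present J l (arr (J ! i)). sz (J ! l))"
proof -
  obtain k where k: "k < length J" "i = ff_order J ! k"
    using ff_order_surj[OF assms(2)] by blast
  obtain k' where k': "k' < length J" "j = ff_order J ! k'"
    using ff_order_surj assms(3) by (auto simp: present_def)
  have "ff_assign J j < ff_nbins J k"
    using less ff_assign_le_nbins[OF k(1)] k(2) by simp
  then have "bin_is_open J (ff_placed J k) (ff_assign J) (ff_assign J j) (arr (J ! i))"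
    using ff_bin_open_at_arrival[OF k] k' assms(3,4) by blast
  then have "1 < bin_load J (ff_placed J k) (ff_assign J) (ff_assign J j) (arr (J ! i)) + sz (J ! i)"
    using ff_overfull_at_arrival[OF k less] by blast
  also have "bin_load J (ff_placed J k) (ff_assign J) (ff_assign J j) (arr (J ! i))
      = (\<Sum>l | l \<in> ff_placed J k \<and> ff_assign J l = ff_assign J j \<and> present J l (arr (J ! i)). sz (J ! l))"
    unfolding bin_load_def by (simp add: sum.inter_filter ff_placed_eq)
  also have "\<dots> \<le> (\<Sum>l | l < length J \<and> ff_assign J l = ff_assign J j \<and> present J l (arr (J ! i)). sz (J ! l))"
    using ff_placed_subset[of J k] sz_nonneg by (intro sum_mono2) auto
  finally show ?thesis by simp
qed

text \<open>Removing the largest element keeps the invariant, because the largest two elements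
  together weigh more than 1.\<close>
lemma card_plus_weight_Max_le:
  fixes B :: "'a::linorder set" and W :: "'a \<Rightarrow> real"
  assumes "finite B" and "B \<noteq> {}" and "\<forall>b\<in>B. 0 \<le> W b"
    and "\<forall>b\<in>B. \<forall>b'\<in>B. b' < b \<longrightarrow> 1 < W b' + W b"
  shows "real (card B) + W (Max B) \<le> 1 + 2 * (\<Sum>b\<in>B. W b)"
  using assms
proof (induction B rule: finite_linorder_max_induct)
  case (insert b A)
  show ?case
  proof (cases "A = {}")
    case True
    then show ?thesis using insert.prems by simp
  next
    case False
    have "Max A < b" "b \<notin> A"
      using insert.hyps False by auto
    then have "Max (insert b A) = b"
      using insert.hyps(1) False by simp
    moreover have "1 < W (Max A) + W b"
      using insert.prems(3) insert.hyps(1,2) False by (simp add: Max_in)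
    moreover have "real (card A) + W (Max A) \<le> 1 + 2 * (\<Sum>b\<in>A. W b)"
      using insert.IH False insert.prems by blast
    ultimately show ?thesis
      using insert.hyps(1) \<open>b \<notin> A\<close> by simp
  qed
qed simp

lemma card_le_pairwise_heavy:
  fixes B :: "'a::linorder set" and W :: "'a \<Rightarrow> real"
  assumes "finite B" and "\<forall>b\<in>B. 0 \<le> W b"
    and "\<forall>b\<in>B. \<forall>b'\<in>B. b' < b \<longrightarrow> 1 < W b' + W b"
  shows "real (card B) \<le> 1 + 2 * (\<Sum>b\<in>B. W b)"
proof (cases "B = {}")
  case False
  then have "0 \<le> W (Max B)" using assms by simp
  then show ?thesis using card_plus_weight_Max_le[OF assms(1) False assms(2,3)] by linarith
qed simp

definition busy_times :: "item list \<Rightarrow> real set" where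
  "busy_times J = (\<Union>it\<in>set J. {arr it..<arr it + dur it})"

lemma busy_times_iff: "t \<in> busy_times J \<longleftrightarrow> (\<exists>i. present J i t)"
  unfolding busy_times_def present_def by (force simp: in_set_conv_nth simp del: split_paired_Ex)

definition alive_within :: "item list \<Rightarrow> real \<Rightarrow> real \<Rightarrow> nat set" where
  "alive_within J D t = {l. l < length J \<and> arr (J ! l) \<le> t \<and> t < arr (J ! l) + dur (J ! l) + D}"

lemma finite_alive_within: "finite (alive_within J D t)"
  by (simp add: alive_within_def)

lemma ff_open_bins_pair_heavy:
  assumes J: "\<forall>it\<in>set J. 0 \<le> sz it \<and> 0 \<le> dur it \<and> dur it \<le> D"
    and i: "present J i t" and j: "present J j t" and less: "ff_assign J j < ff_assign J i"
  shows "1 < (\<Sum>l | l \<in> alive_within J D t \<and> ff_assign J l = ff_assign J j. sz (J ! l))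
           + (\<Sum>l | l \<in> alive_within J D t \<and> ff_assign J l = ff_assign J i. sz (J ! l))"
proof -
  have "i < length J" using i by (simp add: present_def)
  then have sz_i: "0 \<le> sz (J ! i)" "0 \<le> dur (J ! i)" "dur (J ! i) \<le> D"
    using J by auto
  have sz_nonneg: "0 \<le> sz (J ! l)" if "l < length J" for l
    using J that by auto
  have "1 < sz (J ! i) + (\<Sum>l | l < length J \<and> ff_assign J l = ff_assign J j \<and> present J l (arr (J ! i)). sz (J ! l))"
    using ff_overflow[OF _ \<open>i < length J\<close> j _ less] J i by (auto simp: present_def)
  also have "sz (J ! i) \<le> (\<Sum>l | l \<in> alive_within J D t \<and> ff_assign J l = ff_assign J i. sz (J ! l))"
    using \<open>i < length J\<close> i sz_i
    by (intro member_le_sum) (auto simp: alive_within_def present_def intro: sz_nonneg)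
  also have "(\<Sum>l | l < length J \<and> ff_assign J l = ff_assign J j \<and> present J l (arr (J ! i)). sz (J ! l))
      \<le> (\<Sum>l | l \<in> alive_within J D t \<and> ff_assign J l = ff_assign J j. sz (J ! l))"
    using i sz_i(3)
    by (intro sum_mono2) (auto simp: alive_within_def present_def intro: sz_nonneg)
  finally show ?thesis by simp
qed

lemma ff_open_bins_le:
  assumes J: "\<forall>it\<in>set J. 0 \<le> sz it \<and> 0 \<le> dur it \<and> dur it \<le> D"
  shows "real (ff_open_bins J t) \<le> indicator (busy_times J) t
           + 2 * (\<Sum>j<length J. sz (J ! j) * indicator {arr (J ! j)..<arr (J ! j) + dur (J ! j) + D} t)"
proof -
  define A where "A = ff_assign J"
  define B where "B = {b. \<exists>i<length J. A i = b \<and> present J i t}"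
  define W where "W b = (\<Sum>l | l \<in> alive_within J D t \<and> A l = b. sz (J ! l))" for b
  have sz_nonneg: "0 \<le> sz (J ! l)" if "l < length J" for l
    using J that by auto
  have alive_sum: "(\<Sum>j<length J. sz (J ! j) * indicator {arr (J ! j)..<arr (J ! j) + dur (J ! j) + D} t)
      = (\<Sum>l\<in>alive_within J D t. sz (J ! l))"
    by (simp add: alive_within_def sum.inter_filter[symmetric] indicator_def if_distrib conj_commute)
      (rule sum.cong; auto)
  have "(\<Sum>b\<in>B. W b) = (\<Sum>b\<in>B. \<Sum>l\<in>{l\<in>{l\<in>alive_within J D t. A l \<in> B}. A l = b}. sz (J ! l))"
    unfolding W_def by (intro sum.cong) auto
  also have "\<dots> = (\<Sum>l\<in>{l\<in>alive_within J D t. A l \<in> B}. sz (J ! l))"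
    by (intro sum.group) (auto simp: B_def finite_alive_within)
  also have "\<dots> \<le> (\<Sum>l\<in>alive_within J D t. sz (J ! l))"
    by (intro sum_mono2 finite_alive_within) (auto simp: alive_within_def sz_nonneg)
  finally have "(\<Sum>b\<in>B. W b) \<le> (\<Sum>l\<in>alive_within J D t. sz (J ! l))" .
  moreover have "real (card B) \<le> 1 + 2 * (\<Sum>b\<in>B. W b)"
    using ff_open_bins_pair_heavy[OF J]
    by (intro card_le_pairwise_heavy) (auto simp: B_def A_def W_def alive_within_def sz_nonneg intro: sum_nonneg)
  moreover have "B = {}" if "t \<notin> busy_times J"
    using that by (auto simp: B_def busy_times_iff)
  moreover have "0 \<le> (\<Sum>l\<in>alive_within J D t. sz (J ! l))"
    by (intro sum_nonneg) (simp add: alive_within_def sz_nonneg)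
  moreover have "ff_open_bins J t = card B"
    by (simp add: ff_open_bins_def B_def A_def)
  ultimately show ?thesis
    unfolding alive_sum by (cases "t \<in> busy_times J") simp_all
qed

lemma nn_integral_weighted_intervals:
  fixes c a b :: "'i \<Rightarrow> real"
  assumes "finite S" and "\<And>j. j \<in> S \<Longrightarrow> 0 \<le> c j" and "\<And>j. j \<in> S \<Longrightarrow> a j \<le> b j"
  shows "(\<integral>\<^sup>+t. ennreal (\<Sum>j\<in>S. c j * indicator {a j..<b j} t) \<partial>lborel) = ennreal (\<Sum>j\<in>S. c j * (b j - a j))"
proof -
  have "(\<integral>\<^sup>+t. ennreal (\<Sum>j\<in>S. c j * indicator {a j..<b j} t) \<partial>lborel)
      = (\<integral>\<^sup>+t. (\<Sum>j\<in>S. ennreal (c j) * indicator {a j..<b j} t) \<partial>lborel)"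
    using assms(2) by (intro nn_integral_cong)
      (simp add: sum_ennreal[symmetric] ennreal_mult ennreal_indicator)
  also have "\<dots> = (\<Sum>j\<in>S. ennreal (c j) * emeasure lborel {a j..<b j})"
    by (simp add: nn_integral_sum nn_integral_cmult_indicator)
  also have "\<dots> = ennreal (\<Sum>j\<in>S. c j * (b j - a j))"
    using assms(2,3) by (simp add: sum_ennreal[symmetric] ennreal_mult)
  finally show ?thesis .
qed

lemma sum_list_eq_sum_nth: "(\<Sum>it\<leftarrow>J. f it) = (\<Sum>j<length J. f (J ! j))"
  by (simp add: sum_list_sum_nth atLeast0LessThan)

lemma FirstFit_le:
  assumes J: "\<forall>it\<in>set J. 0 \<le> sz it \<and> 0 \<le> dur it \<and> dur it \<le> D"
  shows "FirstFit J \<le> emeasure lborel (busy_times J) + ennreal (2 * (\<Sum>it\<leftarrow>J. sz it * (dur it + D)))"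
proof -
  define w where "w t = 2 * (\<Sum>j<length J. sz (J ! j) * indicator {arr (J ! j)..<arr (J ! j) + dur (J ! j) + D} t)"
    for t
  have J': "0 \<le> sz (J ! j)" "0 \<le> dur (J ! j) + D" if "j < length J" for j
    using J nth_mem[OF that] by (metis add_nonneg_nonneg order_trans)+
  have w_nonneg: "0 \<le> w t" for t
    unfolding w_def using J' by (intro mult_nonneg_nonneg sum_nonneg) simp_all
  have "FirstFit J \<le> (\<integral>\<^sup>+t. ennreal (real (ff_open_bins J t)) \<partial>lborel)"
    unfolding FirstFit_def by (intro nn_integral_mono) (simp add: indicator_def)
  also have "\<dots> \<le> (\<integral>\<^sup>+t. indicator (busy_times J) t + ennreal (w t) \<partial>lborel)"
  proof (intro nn_integral_mono)
    fix t
    have "ennreal (real (ff_open_bins J t)) \<le> ennreal (indicator (busy_times J) t + w t)"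
      using ff_open_bins_le[OF J, of t] unfolding w_def by (rule ennreal_leI)
    then show "ennreal (real (ff_open_bins J t)) \<le> indicator (busy_times J) t + ennreal (w t)"
      using w_nonneg by (simp add: ennreal_plus ennreal_indicator)
  qed
  also have "\<dots> = emeasure lborel (busy_times J) + (\<integral>\<^sup>+t. ennreal (w t) \<partial>lborel)"
  proof -
    have "busy_times J \<in> sets lborel"
      unfolding busy_times_def by (intro sets.finite_UN) auto
    moreover have "w \<in> borel_measurable lborel"
      unfolding w_def by measurable
    ultimately show ?thesis by (simp add: nn_integral_add)
  qed
  also have "(\<integral>\<^sup>+t. ennreal (w t) \<partial>lborel) = ennreal (\<Sum>j<length J. 2 * sz (J ! j) * (dur (J ! j) + D))"
    unfolding w_def sum_distrib_left mult.assoc[symmetric] using J'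
    by (subst nn_integral_weighted_intervals) auto
  also have "(\<Sum>j<length J. 2 * sz (J ! j) * (dur (J ! j) + D)) = 2 * (\<Sum>it\<leftarrow>J. sz it * (dur it + D))"
    by (simp add: sum_list_eq_sum_nth sum_distrib_left mult.assoc)
  finally show ?thesis .
qed

section \<open>Lower bounds on OPT\<close>

lemma OPT_at_packing:
  assumes "valid_instance J"
  shows "\<exists>f :: nat \<Rightarrow> nat. (\<forall>i. present J i t \<longrightarrow> f i < OPT_at J t) \<and>
           (\<forall>b<OPT_at J t. (\<Sum>i\<in>{i. present J i t \<and> f i = b}. sz (J ! i)) \<le> 1)"
  unfolding OPT_at_def
proof (rule LeastI_ex)
  have "(\<Sum>i\<in>{i. present J i t \<and> i = b}. sz (J ! i)) \<le> 1" if "b < length J" for b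
  proof -
    have "{i. present J i t \<and> i = b} = (if present J b t then {b} else {})" by auto
    then show ?thesis
      using assms nth_mem[OF that] by (simp add: valid_instance_def)
  qed
  then show "\<exists>k (f :: nat \<Rightarrow> nat). (\<forall>i. present J i t \<longrightarrow> f i < k) \<and>
               (\<forall>b<k. (\<Sum>i\<in>{i. present J i t \<and> f i = b}. sz (J ! i)) \<le> 1)"
    by (intro exI[of _ "length J"] exI[of _ id]) (simp add: present_def)
qed

lemma present_load_le_OPT_at:
  assumes "valid_instance J"
  shows "(\<Sum>i | present J i t. sz (J ! i)) \<le> real (OPT_at J t)"
proof -
  obtain f where f: "\<forall>i. present J i t \<longrightarrow> f i < OPT_at J t"
    "\<forall>b<OPT_at J t. (\<Sum>i\<in>{i. present J i t \<and> f i = b}. sz (J ! i)) \<le> 1"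
    using OPT_at_packing[OF assms] by blast
  have "finite {i. present J i t}"
    by (rule finite_subset[of _ "{..<length J}"]) (auto simp: present_def)
  then have "(\<Sum>i | present J i t. sz (J ! i)) = (\<Sum>b<OPT_at J t. \<Sum>i\<in>{i. present J i t \<and> f i = b}. sz (J ! i))"
    using f(1) by (subst sum.group[symmetric, where g = f]) (auto intro!: sum.cong)
  also have "\<dots> \<le> (\<Sum>b<OPT_at J t. 1)"
    using f(2) by (intro sum_mono) simp
  finally show ?thesis by simp
qed

lemma present_time_nonneg: "valid_instance J \<Longrightarrow> present J i t \<Longrightarrow> 0 \<le> t"
  unfolding present_def valid_instance_def by (meson nth_mem order_trans)

lemma OPT_at_pos: "valid_instance J \<Longrightarrow> present J i t \<Longrightarrow> 1 \<le> OPT_at J t"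
  using OPT_at_packing[of J t] by fastforce

lemma busy_times_le_OPT:
  assumes "valid_instance J"
  shows "emeasure lborel (busy_times J) \<le> OPT J"
proof -
  have "emeasure lborel (busy_times J) = (\<integral>\<^sup>+t. indicator (busy_times J) t \<partial>lborel)"
    unfolding busy_times_def by (intro nn_integral_indicator[symmetric] sets.finite_UN) auto
  also have "\<dots> \<le> OPT J"
    unfolding OPT_def
  proof (intro nn_integral_mono)
    fix t
    show "indicator (busy_times J) t \<le> ennreal (real (OPT_at J t)) * indicator {0..} t"
    proof (cases "t \<in> busy_times J")
      case True
      then obtain i where "present J i t" by (auto simp: busy_times_iff)
      then show ?thesis
        using OPT_at_pos[OF assms] present_time_nonneg[OF assms] True by (simp add: indicator_def)
    qed simp
  qed
  finally show ?thesis .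
qed

lemma size_time_le_OPT:
  assumes "valid_instance J"
  shows "ennreal (\<Sum>it\<leftarrow>J. sz it * dur it) \<le> OPT J"
proof -
  have J: "0 \<le> sz (J ! i)" "0 \<le> dur (J ! i)" if "i < length J" for i
    using assms nth_mem[OF that] by (auto simp: valid_instance_def less_imp_le)
  have "ennreal (\<Sum>it\<leftarrow>J. sz it * dur it)
      = (\<integral>\<^sup>+t. ennreal (\<Sum>i<length J. sz (J ! i) * indicator {arr (J ! i)..<arr (J ! i) + dur (J ! i)} t) \<partial>lborel)"
    using J by (subst nn_integral_weighted_intervals) (simp_all add: sum_list_eq_sum_nth)
  also have "\<dots> \<le> OPT J"
    unfolding OPT_def
  proof (intro nn_integral_mono)
    fix t
    have load: "(\<Sum>i<length J. sz (J ! i) * indicator {arr (J ! i)..<arr (J ! i) + dur (J ! i)} t)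
        = (\<Sum>i | present J i t. sz (J ! i))"
      by (simp add: sum.inter_filter[symmetric] present_def indicator_def if_distrib)
        (rule sum.cong; auto)
    show "ennreal (\<Sum>i<length J. sz (J ! i) * indicator {arr (J ! i)..<arr (J ! i) + dur (J ! i)} t)
        \<le> ennreal (real (OPT_at J t)) * indicator {0..} t"
    proof (cases "0 \<le> t")
      case True
      then show ?thesis
        unfolding load using present_load_le_OPT_at[OF assms] by (simp add: ennreal_leI)
    next
      case False
      then have "{i. present J i t} = {}"
        using present_time_nonneg[OF assms] by auto
      then show ?thesis
        unfolding load by simp
    qed
  qed
  finally show ?thesis .
qed

section \<open>Stretching intervals\<close>

lemma emeasure_lborel_Ico_eq: "emeasure lborel {p..<q :: real} = ennreal (q - p)"
  by (cases "p \<le> q") (auto simp: ennreal_neg)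

lemma stretched_interval_subset:
  fixes ay dy ax lam :: real
  assumes "ay \<le> ax" and "1 \<le> lam"
  shows "{ax..<ax + lam * (ay + dy - ax)} \<subseteq> {ay..<ay + lam * dy}"
proof -
  have "ax - ay \<le> lam * (ax - ay)"
    using assms by (simp add: mult_le_cancel_right1)
  then show ?thesis
    using assms(1) by (auto simp: algebra_simps)
qed

text \<open>Induction on the intervals ordered by left end point: the new interval x sticks out of
  the union of the earlier ones by at most [c, a x + d x), where c is their largest right end
  point, and its stretch is covered by the stretch of the interval ending at c together with a
  stretch of [c, a x + d x).\<close>
lemma emeasure_stretched_intervals_le:
  fixes a d :: "'i \<Rightarrow> real"
  assumes "finite S" and lam: "1 \<le> lam"
  shows "emeasure lborel (\<Union>i\<in>S. {a i..<a i + lam * d i})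
           \<le> ennreal lam * emeasure lborel (\<Union>i\<in>S. {a i..<a i + d i})"
  using assms(1)
proof (induction S rule: finite_ranking_induct[where f = a])
  case (insert x S)
  define U where "U = (\<Union>i\<in>S. {a i..<a i + d i})"
  define U' where "U' = (\<Union>i\<in>S. {a i..<a i + lam * d i})"
  define c where "c = Max (insert (a x) ((\<lambda>i. a i + d i) ` S))"
  have fin: "finite (insert (a x) ((\<lambda>i. a i + d i) ` S))"
    using insert.hyps(1) by simp
  have c_ge: "a x \<le> c" "U \<subseteq> {..<c}"
    using fin by (auto simp: c_def U_def intro: order.strict_trans2[OF _ Max_ge])
  have meas: "U \<in> sets lborel" "U' \<in> sets lborel"
    using insert.hyps(1) by (auto simp: U_def U'_def intro!: sets.finite_UN)
  have covered: "{a x..<a x + lam * (c - a x)} \<subseteq> U'"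
  proof (cases "c = a x")
    case False
    then obtain y where "y \<in> S" "c = a y + d y"
      using Max_in[OF fin] by (auto simp: c_def)
    then show ?thesis
      using stretched_interval_subset[OF insert.hyps(2) lam, of y "d y"] by (auto simp: U'_def)
  qed simp
  have "emeasure lborel (\<Union>i\<in>insert x S. {a i..<a i + lam * d i})
      \<le> emeasure lborel (U' \<union> {a x + lam * (c - a x)..<a x + lam * d x})"
    using covered meas by (intro emeasure_mono) (auto simp: U'_def)
  also have "\<dots> \<le> emeasure lborel U' + emeasure lborel {a x + lam * (c - a x)..<a x + lam * d x}"
    using meas by (intro emeasure_subadditive) auto
  also have "\<dots> \<le> ennreal lam * emeasure lborel U + ennreal lam * emeasure lborel {c..<a x + d x}"
    using insert.IH lam
    by (intro add_mono) (auto simp: U_def U'_def emeasure_lborel_Ico_eq ennreal_mult'[symmetric] algebra_simps)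
  also have "\<dots> = ennreal lam * emeasure lborel (U \<union> {c..<a x + d x})"
    using meas c_ge by (subst plus_emeasure[symmetric]) (auto simp: distrib_left)
  also have "\<dots> \<le> ennreal lam * emeasure lborel (\<Union>i\<in>insert x S. {a i..<a i + d i})"
    using c_ge insert.hyps(1)
    by (intro mult_left_mono emeasure_mono) (auto simp: U_def intro!: sets.finite_UN)
  finally show ?case .
qed simp

section \<open>Big parts\<close>

lemma num_mig_bounds:
  assumes "0 < C" and "0 < dur it"
  shows "sqrt C * real (num_mig C it) < dur it" "dur it \<le> sqrt C * (real (num_mig C it) + 1)"
proof -
  have migrates: "mig_time C it j < arr it + dur it + real j * C \<longleftrightarrow> sqrt C * (real j + 1) < dur it" for j
    by (simp add: mig_time_def algebra_simps)
  have num_mig: "num_mig C it = (LEAST j. \<not> sqrt C * (real j + 1) < dur it)"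
    unfolding num_mig_def migrates ..
  have "0 < sqrt C" using assms(1) by simp
  obtain n :: nat where "dur it / sqrt C < real n"
    using reals_Archimedean2 by blast
  then have "dur it < sqrt C * real n"
    using \<open>0 < sqrt C\<close> by (simp add: field_simps)
  moreover have "sqrt C * (real n + 1) = sqrt C * real n + sqrt C"
    by (simp add: algebra_simps)
  ultimately have "\<not> sqrt C * (real n + 1) < dur it"
    using \<open>0 < sqrt C\<close> by linarith
  then show "dur it \<le> sqrt C * (real (num_mig C it) + 1)"
    unfolding num_mig by (metis (mono_tags) LeastI not_less)
  show "sqrt C * real (num_mig C it) < dur it"
  proof (cases "num_mig C it")
    case (Suc k)
    then have "sqrt C * (real k + 1) < dur it"
      using not_less_Least[of k "\<lambda>j. \<not> sqrt C * (real j + 1) < dur it"] num_mig by simp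
    then show ?thesis using Suc by (simp add: add.commute)
  qed (use assms in simp)
qed

lemma num_mig_mult_le:
  assumes "0 < C" and "0 < dur it"
  shows "real (num_mig C it) * C \<le> sqrt C * dur it"
proof -
  have "real (num_mig C it) * C = sqrt C * (sqrt C * real (num_mig C it))"
    using assms(1) by (simp add: algebra_simps)
  also have "\<dots> \<le> sqrt C * dur it"
    using num_mig_bounds(1)[OF assms] assms(1) by (intro mult_left_mono) auto
  finally show ?thesis .
qed

lemma alg3_departure_le:
  "0 < C \<Longrightarrow> 0 < dur it \<Longrightarrow> alg3_departure C it \<le> arr it + (1 + sqrt C) * dur it"
  using num_mig_mult_le[of C it] by (simp add: alg3_departure_def algebra_simps)

lemma big_part_bounds:
  assumes "0 < C" and "0 < dur it" and "p \<in> set (big_parts_item C it)"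
  shows "sz p = sz it" "0 \<le> dur p" "dur p \<le> C + sqrt C"
    "arr it \<le> arr p" "arr p + dur p \<le> alg3_departure C it"
proof -
  define m where "m = num_mig C it"
  obtain j where j: "j < m" and p: "p = (mig_time C it j, sz it,
      (if Suc j < m then mig_time C it (Suc j) else alg3_departure C it) - mig_time C it j)"
    using assms(3) unfolding big_parts_item_def m_def by auto
  have m: "sqrt C * real m < dur it" "dur it \<le> sqrt C * (real m + 1)"
    using num_mig_bounds[OF assms(1,2)] by (simp_all add: m_def)
  show "sz p = sz it" "arr it \<le> arr p"
    using assms(1) by (simp_all add: p sz_def arr_def mig_time_def)
  show "0 \<le> dur p" "dur p \<le> C + sqrt C" "arr p + dur p \<le> alg3_departure C it"
  proof (atomize (full), cases "Suc j < m")
    case True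
    have "sqrt C * (real j + 2) \<le> sqrt C * real m" "C * (real j + 1) \<le> C * real m"
      using True assms(1) by (intro mult_left_mono; simp)+
    then show "0 \<le> dur p \<and> dur p \<le> C + sqrt C \<and> arr p + dur p \<le> alg3_departure C it"
      using True m less_imp_le[OF assms(1)]
      by (simp add: p dur_def arr_def mig_time_def alg3_departure_def m_def[symmetric] algebra_simps)
  next
    case False
    then have "m = Suc j" using j by simp
    then show "0 \<le> dur p \<and> dur p \<le> C + sqrt C \<and> arr p + dur p \<le> alg3_departure C it"
      using False m assms(1)
      by (simp add: p dur_def arr_def mig_time_def alg3_departure_def m_def[symmetric] algebra_simps)
  qed
qed

lemma set_big_parts: "set (big_parts C I) = (\<Union>it\<in>set I. set (big_parts_item C it))"
  by (simp add: big_parts_def)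

lemma big_parts_bounds:
  assumes "valid_instance I" and "0 < C"
  shows "\<forall>p\<in>set (big_parts C I). 0 \<le> sz p \<and> 0 \<le> dur p \<and> dur p \<le> C + sqrt C"
  using assms big_part_bounds(1-3)[OF assms(2)] by (fastforce simp: set_big_parts valid_instance_def)

lemma busy_times_big_parts_subset:
  assumes "valid_instance I" and "0 < C"
  shows "busy_times (big_parts C I) \<subseteq> (\<Union>it\<in>set I. {arr it..<arr it + (1 + sqrt C) * dur it})"
proof
  fix t assume "t \<in> busy_times (big_parts C I)"
  then obtain it p where it: "it \<in> set I" "p \<in> set (big_parts_item C it)" "arr p \<le> t" "t < arr p + dur p"
    by (auto simp: busy_times_def set_big_parts)
  have "0 < dur it" using assms(1) it(1) by (simp add: valid_instance_def)
  then show "t \<in> (\<Union>it\<in>set I. {arr it..<arr it + (1 + sqrt C) * dur it})"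
    using it big_part_bounds(4,5)[OF assms(2) _ it(2)] alg3_departure_le[OF assms(2)] by fastforce
qed

lemma busy_times_big_parts_le:
  assumes "valid_instance I" and "0 < C"
  shows "emeasure lborel (busy_times (big_parts C I)) \<le> ennreal (1 + sqrt C) * OPT I"
proof -
  have "emeasure lborel (busy_times (big_parts C I))
      \<le> emeasure lborel (\<Union>it\<in>set I. {arr it..<arr it + (1 + sqrt C) * dur it})"
    using busy_times_big_parts_subset[OF assms] by (intro emeasure_mono sets.finite_UN) auto
  also have "\<dots> \<le> ennreal (1 + sqrt C) * emeasure lborel (busy_times I)"
    unfolding busy_times_def using assms(2) by (intro emeasure_stretched_intervals_le) auto
  also have "\<dots> \<le> ennreal (1 + sqrt C) * OPT I"
    using busy_times_le_OPT[OF assms(1)] by (rule mult_left_mono) simp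
  finally show ?thesis .
qed

lemma big_parts_item_weighted_le:
  assumes "1 \<le> C" and "0 < dur it" and "0 \<le> sz it"
  shows "(\<Sum>p\<leftarrow>big_parts_item C it. sz p * (dur p + (C + sqrt C))) \<le> 4 * sqrt C * (sz it * dur it)"
proof -
  have "sqrt C \<le> C"
    using assms(1) real_sqrt_le_mono[of C "C * C"] by (simp add: real_sqrt_mult)
  then have "(\<Sum>p\<leftarrow>big_parts_item C it. sz p * (dur p + (C + sqrt C)))
      \<le> (\<Sum>p\<leftarrow>big_parts_item C it. sz it * (4 * C))"
  proof (intro sum_list_mono)
    fix p assume "p \<in> set (big_parts_item C it)"
    then have "sz p = sz it" "dur p \<le> C + sqrt C"
      using big_part_bounds[of C it p] assms by auto
    then show "sz p * (dur p + (C + sqrt C)) \<le> sz it * (4 * C)"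
      using \<open>sqrt C \<le> C\<close> assms(3) by (simp add: mult_left_mono)
  qed
  also have "\<dots> = 4 * sz it * (real (num_mig C it) * C)"
    by (simp add: big_parts_item_def sum_list_triv)
  also have "\<dots> \<le> 4 * sz it * (sqrt C * dur it)"
    using num_mig_mult_le[of C it] assms by (intro mult_left_mono) auto
  finally show ?thesis by (simp add: algebra_simps)
qed

lemma big_parts_weighted_le:
  assumes "valid_instance I" and "1 \<le> C"
  shows "(\<Sum>p\<leftarrow>big_parts C I. sz p * (dur p + (C + sqrt C))) \<le> 4 * sqrt C * (\<Sum>it\<leftarrow>I. sz it * dur it)"
proof -
  have "(\<Sum>p\<leftarrow>big_parts C I. sz p * (dur p + (C + sqrt C)))
      = (\<Sum>it\<leftarrow>I. \<Sum>p\<leftarrow>big_parts_item C it. sz p * (dur p + (C + sqrt C)))"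
    unfolding big_parts_def by (induction I) auto
  also have "\<dots> \<le> (\<Sum>it\<leftarrow>I. 4 * sqrt C * (sz it * dur it))"
    using assms by (intro sum_list_mono big_parts_item_weighted_le) (auto simp: valid_instance_def)
  finally show ?thesis by (simp add: sum_list_const_mult)
qed

lemma big_parts_weighted_le_OPT:
  assumes "valid_instance I" and "1 \<le> C"
  shows "ennreal (2 * (\<Sum>p\<leftarrow>big_parts C I. sz p * (dur p + (C + sqrt C)))) \<le> ennreal (8 * sqrt C) * OPT I"
proof -
  have "ennreal (2 * (\<Sum>p\<leftarrow>big_parts C I. sz p * (dur p + (C + sqrt C))))
      \<le> ennreal (8 * sqrt C) * ennreal (\<Sum>it\<leftarrow>I. sz it * dur it)"
    using big_parts_weighted_le[OF assms] assms(2) by (simp add: ennreal_mult'[symmetric] ennreal_leI)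
  also have "\<dots> \<le> ennreal (8 * sqrt C) * OPT I"
    using size_time_le_OPT[OF assms(1)] by (rule mult_left_mono) simp
  finally show ?thesis .
qed

theorem lemma17:
  shows "\<exists>K::real. \<forall>C::real. \<forall>I::item list.
           C \<ge> 1 \<longrightarrow> valid_instance I \<longrightarrow> (\<forall>it\<in>set I. dur it \<ge> 1) \<longrightarrow>
           FirstFit (big_parts C I) \<le> ennreal (K * sqrt C) * OPT I"
proof (intro exI[of _ 10] allI impI)
  fix C :: real and I :: "item list"
  assume C: "1 \<le> C" and I: "valid_instance I"
  have "FirstFit (big_parts C I) \<le> emeasure lborel (busy_times (big_parts C I))
          + ennreal (2 * (\<Sum>p\<leftarrow>big_parts C I. sz p * (dur p + (C + sqrt C))))"
    using C I by (intro FirstFit_le big_parts_bounds) auto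
  also have "\<dots> \<le> ennreal (1 + sqrt C) * OPT I + ennreal (8 * sqrt C) * OPT I"
    using C I by (intro add_mono busy_times_big_parts_le big_parts_weighted_le_OPT) auto
  also have "\<dots> = (ennreal (1 + sqrt C) + ennreal (8 * sqrt C)) * OPT I"
    by (simp only: distrib_right)
  also have "\<dots> = ennreal (1 + 9 * sqrt C) * OPT I"
    using C by (subst ennreal_plus[symmetric]) (auto simp: add.commute)
  also have "\<dots> \<le> ennreal (10 * sqrt C) * OPT I"
    using C by (intro mult_right_mono ennreal_leI) auto
  finally show "FirstFit (big_parts C I) \<le> ennreal (10 * sqrt C) * OPT I" .
qed

end
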